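(* Let $n\ge1$, $\delta_1\in[0,1)$, $\delta_2\ge0$, and assume $n\ge2$, or $n=1$ and $\delta_1\in[0,1/2)$. Then there is $\lambda>0$ such that \[ \int_{[-1,1]^n}\Big(|x|^{2\delta_1}|\nabla\psi(x)|^2+(\pi/2)^2|x|^{2\delta_2}\psi(x)^2\Big)dx\ \ge\ \lambda\int_{[-1,1]^n}\psi(x)^2\,dx \] for all $\psi\in C_c^1(\mathbb R^n)$.
   Context: $|x|$ denotes the Euclidean norm of $x\in\mathbb R^n$. *)

theory Defs
  imports "HOL-Analysis.Analysis"
begin

text \<open>Power weight |x|^(2d) with the convention |0|^0 = 1 (Isabelle's powr has 0 powr 0 = 0).\<close>
definition normpow :: "'a::real_normed_vector \<Rightarrow> real \<Rightarrow> real" where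
  "normpow x a = (if x = 0 then (if a = 0 then 1 else 0) else norm x powr a)"

definition C1c_with_grad :: "(real^'n \<Rightarrow> real) \<Rightarrow> (real^'n \<Rightarrow> real^'n) \<Rightarrow> bool" where
  "C1c_with_grad \<psi> G \<longleftrightarrow>
     (\<forall>x. GDERIV \<psi> x :> G x) \<and> continuous_on UNIV G \<and> compact (closure {x. \<psi> x \<noteq> 0})"

end

theory Submission imports Defs begin

text \<open>
  Let Q(r) = [-r, r]^n. For x in Q(1), integrating the derivative of r \<mapsto> \<psi>(r x)^2 over [1/2, 1]
  and using -2ab \<le> a^2/2 + 2b^2 bounds \<psi>(x/2)^2 by \<psi>(x)^2 plus a radial integral of
  \<psi>^2/2 + C |y|^(2\<delta>1) |\<nabla>\<psi>(y)|^2; the factor |x|^2 produced by the chain rule is absorbed into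
  the weight because \<delta>1 \<le> 1, |x| \<le> n on Q(1) and |r x| \<ge> |x|/2. Integrating over Q(1) and rescaling gives
  \<integral>_Q(1/2) \<psi>^2 \<le> 3/4 \<integral>_Q(1) \<psi>^2 + C \<integral>_Q(1) |x|^(2\<delta>1) |\<nabla>\<psi>|^2, while on Q(1) - Q(1/2)
  the weight |x|^(2\<delta>2) is at least 2^(-2\<delta>2). Together the two estimates bound \<integral>_Q(1) \<psi>^2
  by the weighted energy.
\<close>

abbreviation cube :: "real \<Rightarrow> (real^'n) set" where
  "cube r \<equiv> cbox (\<chi> i. -r) (\<chi> i. r)"

lemma normpow_nonneg: "normpow x a \<ge> 0"
  by (simp add: normpow_def)

lemma continuous_on_normpow:
  assumes "a \<ge> 0"
  shows "continuous_on UNIV (\<lambda>x::'a::real_normed_vector. normpow x a)"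
proof (cases "a = 0")
  case True
  then have "(\<lambda>x::'a. normpow x a) = (\<lambda>x. 1)" by (auto simp: normpow_def fun_eq_iff)
  then show ?thesis by (simp only:) (rule continuous_on_const)
next
  case False
  then have "(\<lambda>x::'a. normpow x a) = (\<lambda>x. norm x powr a)" by (auto simp: normpow_def fun_eq_iff)
  then show ?thesis
    using False assms by (simp only:) (intro continuous_on_powr' continuous_intros, auto)
qed

lemma C1c_with_grad_has_derivative:
  "C1c_with_grad \<psi> G \<Longrightarrow> (\<psi> has_derivative (\<lambda>h. h \<bullet> G y)) (at y)"
  by (simp add: C1c_with_grad_def gderiv_def)

lemma C1c_with_grad_continuous: "C1c_with_grad \<psi> G \<Longrightarrow> continuous_on UNIV \<psi>"
  by (meson C1c_with_grad_has_derivative continuous_at_imp_continuous_on has_derivative_continuous)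

lemma C1c_with_grad_continuous_grad: "C1c_with_grad \<psi> G \<Longrightarrow> continuous_on UNIV G"
  by (simp add: C1c_with_grad_def)

lemma cube_mono: "0 \<le> r \<Longrightarrow> r \<le> s \<Longrightarrow> cube r \<subseteq> cube s"
  by (auto simp: mem_box_cart) (metis order.trans neg_le_iff_le)+

lemma norm_le_card_cube: "x \<in> cube 1 \<Longrightarrow> norm (x::real^'n) \<le> real CARD('n)"
proof -
  assume "x \<in> cube 1"
  then have "\<bar>x $ i\<bar> \<le> 1" for i by (simp add: mem_box_cart abs_le_iff)
  then have "(\<Sum>i\<in>UNIV. \<bar>x $ i\<bar>) \<le> (\<Sum>i\<in>(UNIV::'n set). 1)"
    by (intro sum_mono) auto
  then show ?thesis using norm_le_l1_cart[of x] by simp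
qed

lemma integrable_on_cube: "continuous_on UNIV f \<Longrightarrow> (f::real^'n \<Rightarrow> real) integrable_on cube r"
  by (meson integrable_continuous continuous_on_subset subset_UNIV)

lemma integral_cube_scaleR:
  fixes F :: "real^'n \<Rightarrow> real"
  assumes "continuous_on UNIV F" "r > 0"
  shows "integral (cube r) F = r ^ CARD('n) * integral (cube 1) (\<lambda>x. F (r *\<^sub>R x))"
proof -
  have "(F has_integral integral (cube r) F) (cube r)"
    using assms(1) by (intro integrable_integral integrable_on_cube)
  from has_integral_affinity'[OF this assms(2), of 0]
  have "((\<lambda>x. F (r *\<^sub>R x)) has_integral integral (cube r) F /\<^sub>R r ^ CARD('n))
          (cbox ((\<chi> i. -r) /\<^sub>R r) ((\<chi> i. r) /\<^sub>R r))"
    by simp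
  moreover have "(\<chi> i. -r) /\<^sub>R r = ((\<chi> i. -1)::real^'n)" "(\<chi> i. r) /\<^sub>R r = ((\<chi> i. 1)::real^'n)"
    using assms(2) by (simp_all add: vec_eq_iff)
  ultimately show ?thesis
    using assms(2) by (simp add: integral_unique)
qed

lemma integral_cube_scaleR_le:
  fixes F :: "real^'n \<Rightarrow> real"
  assumes F: "continuous_on UNIV F" "\<And>x. F x \<ge> 0" and "0 < \<rho>" "\<rho> \<le> r" "r \<le> 1"
  shows "integral (cube 1) (\<lambda>x. F (r *\<^sub>R x)) \<le> integral (cube 1) F / \<rho> ^ CARD('n)"
proof -
  have r: "r > 0" using assms by auto
  have "integral (cube 1) (\<lambda>x. F (r *\<^sub>R x)) = integral (cube r) F / r ^ CARD('n)"
    using integral_cube_scaleR[OF F(1) r] r by simp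
  also have "\<dots> \<le> integral (cube 1) F / r ^ CARD('n)"
    using assms r by (intro divide_right_mono integral_subset_le cube_mono integrable_on_cube) auto
  also have "\<dots> \<le> integral (cube 1) F / \<rho> ^ CARD('n)"
    using assms by (intro divide_left_mono integral_nonneg integrable_on_cube power_mono) auto
  finally show ?thesis .
qed

lemma continuous_on_radial_integral:
  fixes F :: "real^'n \<Rightarrow> real"
  assumes "continuous_on UNIV F"
  shows "continuous_on UNIV (\<lambda>x. integral {a..b} (\<lambda>r. F (r *\<^sub>R x)))"
  using integral_continuous_on_param[of UNIV a b "\<lambda>x r. F (r *\<^sub>R x)"]
  by (simp add: cbox_interval continuous_on_compose2[OF assms] case_prod_beta continuous_intros)

lemma integral_cube_radial_integral_le:
  fixes F :: "real^'n \<Rightarrow> real"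
  assumes F: "continuous_on UNIV F" "\<And>x. F x \<ge> 0" and \<rho>: "0 < \<rho>" "\<rho> \<le> 1"
  shows "integral (cube 1) (\<lambda>x. integral {\<rho>..1} (\<lambda>r. F (r *\<^sub>R x)))
           \<le> (1 - \<rho>) * (integral (cube 1) F / \<rho> ^ CARD('n))"
proof -
  have "integral (cube 1) (\<lambda>x. integral {\<rho>..1} (\<lambda>r. F (r *\<^sub>R x)))
          = integral {\<rho>..1} (\<lambda>r. integral (cube 1) (\<lambda>x. F (r *\<^sub>R x)))"
    using integral_swap_continuous[of "\<chi> i. -1" \<rho> "\<chi> i. 1" 1 "\<lambda>x r. F (r *\<^sub>R x)"]
    by (simp add: cbox_interval continuous_on_compose2[OF F(1)] case_prod_beta continuous_intros)
  also have "\<dots> \<le> integral {\<rho>..1} (\<lambda>r. integral (cube 1) F / \<rho> ^ CARD('n))"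
  proof (rule integral_le)
    show "(\<lambda>r. integral (cube 1) (\<lambda>x. F (r *\<^sub>R x))) integrable_on {\<rho>..1}"
      using integral_continuous_on_param[of "{\<rho>..1}" "\<chi> i. -1" "\<chi> i. 1" "\<lambda>r x. F (r *\<^sub>R x)"]
      by (intro integrable_continuous_interval)
        (simp add: continuous_on_compose2[OF F(1)] case_prod_beta continuous_intros)
  qed (use integral_cube_scaleR_le[OF F \<rho>(1)] in auto)
  also have "\<dots> = (1 - \<rho>) * (integral (cube 1) F / \<rho> ^ CARD('n))"
    using \<rho> by simp
  finally show ?thesis .
qed

lemma has_real_derivative_sq_along_ray:
  assumes "C1c_with_grad \<psi> G"
  shows "((\<lambda>r. (\<psi> (r *\<^sub>R x))\<^sup>2) has_real_derivative 2 * \<psi> (r *\<^sub>R x) * (G (r *\<^sub>R x) \<bullet> x)) (at r)"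
proof -
  have "((\<lambda>r. \<psi> (r *\<^sub>R x)) has_derivative (\<lambda>h. (h *\<^sub>R x) \<bullet> G (r *\<^sub>R x))) (at r)"
    by (rule has_derivative_compose[OF _ C1c_with_grad_has_derivative[OF assms]])
      (auto intro!: derivative_eq_intros)
  moreover have "(\<lambda>h. (h *\<^sub>R x) \<bullet> G (r *\<^sub>R x)) = (*) (G (r *\<^sub>R x) \<bullet> x)"
    by (auto simp: fun_eq_iff inner_commute)
  ultimately have "((\<lambda>r. \<psi> (r *\<^sub>R x)) has_real_derivative G (r *\<^sub>R x) \<bullet> x) (at r)"
    by (simp add: has_field_derivative_def)
  from DERIV_mult[OF this this] show ?thesis
    by (simp add: power2_eq_square algebra_simps)
qed

lemma sq_diff_eq_integral_along_ray:
  assumes "C1c_with_grad \<psi> G" and "\<rho> \<le> 1"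
  shows "(\<psi> x)\<^sup>2 - (\<psi> (\<rho> *\<^sub>R x))\<^sup>2 = integral {\<rho>..1} (\<lambda>r. 2 * \<psi> (r *\<^sub>R x) * (G (r *\<^sub>R x) \<bullet> x))"
proof -
  have "((\<lambda>r. 2 * \<psi> (r *\<^sub>R x) * (G (r *\<^sub>R x) \<bullet> x)) has_integral (\<psi> (1 *\<^sub>R x))\<^sup>2 - (\<psi> (\<rho> *\<^sub>R x))\<^sup>2) {\<rho>..1}"
    using assms by (intro fundamental_theorem_of_calculus)
      (auto intro!: has_real_derivative_iff_has_vector_derivative[THEN iffD1]
        DERIV_subset[OF has_real_derivative_sq_along_ray])
  then show ?thesis by (simp add: integral_unique)
qed

lemma norm_sq_le_normpow_scaleR:
  fixes x :: "real^'n"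
  assumes "x \<in> cube 1" "0 < \<rho>" "\<rho> \<le> r" "r \<le> 1" "0 \<le> \<delta>" "\<delta> \<le> 1"
  shows "(norm x)\<^sup>2 \<le> (real CARD('n) / \<rho>)\<^sup>2 * normpow (r *\<^sub>R x) (2*\<delta>)"
proof (cases "x = 0")
  case True
  then show ?thesis by (simp add: normpow_nonneg)
next
  case False
  define N where "N = real CARD('n)"
  define t where "t = \<rho> * norm x / N"
  have N: "N \<ge> 1" by (simp add: N_def)
  have "norm x \<le> N" using norm_le_card_cube[OF assms(1)] by (simp add: N_def)
  then have t: "0 < t" "t \<le> 1"
    using False assms N mult_mono[of \<rho> 1 "norm x" N] by (auto simp: t_def)
  have "t \<le> \<rho> * norm x"
    using N assms divide_left_mono[of 1 N "\<rho> * norm x"] by (simp add: t_def)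
  also have "\<dots> \<le> norm (r *\<^sub>R x)"
    using assms by (simp add: mult_right_mono)
  finally have t_le: "t \<le> norm (r *\<^sub>R x)" .
  have "t\<^sup>2 = t powr 2" using t by (simp add: powr_realpow)
  also have "\<dots> \<le> t powr (2*\<delta>)" using assms t by (intro powr_mono') auto
  also have "\<dots> \<le> norm (r *\<^sub>R x) powr (2*\<delta>)" using assms t t_le by (intro powr_mono2) auto
  also have "\<dots> = normpow (r *\<^sub>R x) (2*\<delta>)" using False assms by (simp add: normpow_def)
  finally have "(N/\<rho>)\<^sup>2 * t\<^sup>2 \<le> (N/\<rho>)\<^sup>2 * normpow (r *\<^sub>R x) (2*\<delta>)"
    by (simp add: mult_left_mono)
  moreover have "(N/\<rho>)\<^sup>2 * t\<^sup>2 = (norm x)\<^sup>2"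
    using N assms by (simp add: t_def field_simps power2_eq_square)
  ultimately show ?thesis by (simp add: N_def)
qed

lemma neg_radial_derivative_le:
  fixes x g :: "real^'n"
  assumes "x \<in> cube 1" "0 < \<rho>" "\<rho> \<le> r" "r \<le> 1" "0 \<le> \<delta>" "\<delta> \<le> 1"
  shows "- (2 * p * (g \<bullet> x))
           \<le> p\<^sup>2 / 2 + 2 * (real CARD('n) / \<rho>)\<^sup>2 * (normpow (r *\<^sub>R x) (2*\<delta>) * (norm g)\<^sup>2)"
proof -
  have AM_GM: "- (2 * p * u) \<le> p\<^sup>2 / 2 + 2 * u\<^sup>2" for u :: real
    using zero_le_square[of "p + 2*u"] by (simp add: power2_eq_square algebra_simps)
  have "(g \<bullet> x)\<^sup>2 \<le> (norm g)\<^sup>2 * (norm x)\<^sup>2"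
    by (metis Cauchy_Schwarz_ineq2 abs_le_square_iff abs_mult abs_norm_cancel power_mult_distrib)
  also have "\<dots> \<le> (norm g)\<^sup>2 * ((real CARD('n) / \<rho>)\<^sup>2 * normpow (r *\<^sub>R x) (2*\<delta>))"
    using norm_sq_le_normpow_scaleR[OF assms] by (intro mult_left_mono) auto
  finally show ?thesis
    using AM_GM[of "g \<bullet> x"] by (simp add: algebra_simps)
qed

lemma sq_scaleR_le_sq_plus_radial_integral:
  fixes \<psi> :: "real^'n \<Rightarrow> real"
  assumes C: "C1c_with_grad \<psi> G" and x: "x \<in> cube 1"
    and \<rho>: "0 < \<rho>" "\<rho> \<le> 1" and \<delta>: "0 \<le> \<delta>" "\<delta> \<le> 1"
  defines "F \<equiv> \<lambda>y. (\<psi> y)\<^sup>2 / 2 + 2 * (real CARD('n) / \<rho>)\<^sup>2 * (normpow y (2*\<delta>) * (norm (G y))\<^sup>2)"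
  shows "(\<psi> (\<rho> *\<^sub>R x))\<^sup>2 \<le> (\<psi> x)\<^sup>2 + integral {\<rho>..1} (\<lambda>r. F (r *\<^sub>R x))"
proof -
  have cont: "continuous_on UNIV \<psi>" "continuous_on UNIV G" "continuous_on UNIV (\<lambda>y. normpow y (2*\<delta>))"
    using C C1c_with_grad_continuous C1c_with_grad_continuous_grad \<delta>
    by (auto intro: continuous_on_normpow)
  have "- integral {\<rho>..1} (\<lambda>r. 2 * \<psi> (r *\<^sub>R x) * (G (r *\<^sub>R x) \<bullet> x))
          = integral {\<rho>..1} (\<lambda>r. - (2 * \<psi> (r *\<^sub>R x) * (G (r *\<^sub>R x) \<bullet> x)))"
    by (simp add: integral_neg)
  also have "\<dots> \<le> integral {\<rho>..1} (\<lambda>r. F (r *\<^sub>R x))"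
    unfolding F_def using neg_radial_derivative_le[OF x \<rho>(1) _ _ \<delta>]
    by (intro integral_le integrable_continuous_interval
        continuous_on_compose2[OF cont(1)] continuous_on_compose2[OF cont(2)]
        continuous_on_compose2[OF cont(3)] continuous_intros) auto
  finally show ?thesis
    using sq_diff_eq_integral_along_ray[OF C \<rho>(2), of x] by linarith
qed

lemma integral_inner_cube_sq_le:
  fixes \<psi> :: "real^'n \<Rightarrow> real"
  assumes C: "C1c_with_grad \<psi> G" and \<rho>: "0 < \<rho>" "\<rho> \<le> 1" and \<delta>: "0 \<le> \<delta>" "\<delta> \<le> 1"
  shows "integral (cube \<rho>) (\<lambda>x. (\<psi> x)\<^sup>2)
           \<le> \<rho> ^ CARD('n) * integral (cube 1) (\<lambda>x. (\<psi> x)\<^sup>2)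
             + (1 - \<rho>) * (integral (cube 1) (\<lambda>x. (\<psi> x)\<^sup>2) / 2
               + 2 * (real CARD('n) / \<rho>)\<^sup>2 * integral (cube 1) (\<lambda>x. normpow x (2*\<delta>) * (norm (G x))\<^sup>2))"
proof -
  define K where "K = 2 * (real CARD('n) / \<rho>)\<^sup>2"
  define F where "F = (\<lambda>y. (\<psi> y)\<^sup>2 / 2 + K * (normpow y (2*\<delta>) * (norm (G y))\<^sup>2))"
  define A where "A = integral (cube 1) (\<lambda>x. (\<psi> x)\<^sup>2)"
  define R where "R = (\<lambda>x. integral {\<rho>..1} (\<lambda>r. F (r *\<^sub>R x)))"
  have c\<psi>: "continuous_on UNIV (\<lambda>x. (\<psi> x)\<^sup>2)"
    using C1c_with_grad_continuous[OF C] by (intro continuous_intros)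
  have cG: "continuous_on UNIV G"
    using C by (rule C1c_with_grad_continuous_grad)
  have cw: "continuous_on UNIV (\<lambda>y::real^'n. normpow y (2*\<delta>))"
    using \<delta> by (intro continuous_on_normpow) simp
  have cF: "continuous_on UNIV F"
    unfolding F_def using C1c_with_grad_continuous[OF C] cG cw by (intro continuous_intros) auto
  have cR: "continuous_on UNIV R"
    unfolding R_def by (rule continuous_on_radial_integral[OF cF])
  have F_nonneg: "F y \<ge> 0" for y
    by (simp add: F_def K_def normpow_nonneg)
  have "(\<psi> (\<rho> *\<^sub>R x))\<^sup>2 \<le> (\<psi> x)\<^sup>2 + R x" if "x \<in> cube 1" for x
    using sq_scaleR_le_sq_plus_radial_integral[OF C that \<rho> \<delta>] by (simp add: R_def F_def K_def)
  then have "integral (cube 1) (\<lambda>x. (\<psi> (\<rho> *\<^sub>R x))\<^sup>2) \<le> integral (cube 1) (\<lambda>x. (\<psi> x)\<^sup>2 + R x)"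
    by (intro integral_le integrable_on_cube continuous_on_compose2[OF c\<psi>] cR continuous_intros)
      auto
  also have "\<dots> = A + integral (cube 1) R"
    unfolding A_def by (intro integral_add integrable_on_cube c\<psi> cR)
  also have "integral (cube 1) R \<le> (1 - \<rho>) * (integral (cube 1) F / \<rho> ^ CARD('n))"
    unfolding R_def by (rule integral_cube_radial_integral_le[OF cF F_nonneg \<rho>])
  also have "integral (cube 1) F
      = A / 2 + K * integral (cube 1) (\<lambda>x. normpow x (2*\<delta>) * (norm (G x))\<^sup>2)"
    unfolding F_def A_def using C1c_with_grad_continuous[OF C] cG cw
    by (subst integral_add integral_divide integral_mult_right,
        auto intro!: integrable_on_cube continuous_intros)+
  finally have "integral (cube 1) (\<lambda>x. (\<psi> (\<rho> *\<^sub>R x))\<^sup>2)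
      \<le> A + (1 - \<rho>) * ((A / 2 + K * integral (cube 1) (\<lambda>x. normpow x (2*\<delta>) * (norm (G x))\<^sup>2)) / \<rho> ^ CARD('n))"
    by simp
  then have "\<rho> ^ CARD('n) * integral (cube 1) (\<lambda>x. (\<psi> (\<rho> *\<^sub>R x))\<^sup>2)
      \<le> \<rho> ^ CARD('n) * A + (1 - \<rho>) * (A / 2 + K * integral (cube 1) (\<lambda>x. normpow x (2*\<delta>) * (norm (G x))\<^sup>2))"
    using \<rho> by (simp add: mult_left_mono field_simps)
  then show ?thesis
    using integral_cube_scaleR[OF c\<psi> \<rho>(1)] by (simp add: A_def K_def)
qed

lemma integral_cube_le_inner_plus_weighted:
  fixes f :: "real^'n \<Rightarrow> real"
  assumes f: "continuous_on UNIV f" "\<And>x. f x \<ge> 0" and \<rho>: "0 < \<rho>" "\<rho> \<le> 1" and "0 \<le> \<delta>"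
  shows "integral (cube 1) f
           \<le> integral (cube \<rho>) f + integral (cube 1) (\<lambda>x. normpow x (2*\<delta>) * f x) / \<rho> powr (2*\<delta>)"
proof -
  define c where "c = 1 / \<rho> powr (2*\<delta>)"
  define g where "g = (\<lambda>x. if x \<in> cube \<rho> then f x else 0)"
  have sub: "cube \<rho> \<subseteq> cube 1"
    using \<rho> by (intro cube_mono) auto
  have cw: "continuous_on UNIV (\<lambda>x::real^'n. normpow x (2*\<delta>))"
    using assms by (intro continuous_on_normpow) simp
  have g: "g integrable_on cube 1" "integral (cube 1) g = integral (cube \<rho>) f"
    using integrable_on_cube[OF f(1), of \<rho>]
    by (simp_all add: g_def integrable_restrict_Int integral_restrict_Int Int_absorb2[OF sub])
  have "f x \<le> g x + c * (normpow x (2*\<delta>) * f x)" for x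
  proof (cases "x \<in> cube \<rho>")
    case True
    then show ?thesis using f(2)[of x] by (simp add: g_def c_def normpow_nonneg)
  next
    case False
    then have "\<not> (\<forall>i. \<bar>x $ i\<bar> \<le> \<rho>)"
      by (auto simp: mem_box_cart abs_le_iff) (metis minus_le_iff)
    then obtain i where "\<rho> < \<bar>x $ i\<bar>"
      by (auto simp: not_le)
    also have "\<dots> \<le> norm x" by (rule component_le_norm_cart)
    finally have x: "\<rho> < norm x" .
    then have "\<rho> powr (2*\<delta>) \<le> normpow x (2*\<delta>)"
      using \<rho> assms by (auto simp: normpow_def intro: powr_mono2)
    then have "1 \<le> c * normpow x (2*\<delta>)"
      using \<rho> by (simp add: c_def field_simps)
    then show ?thesis
      using False f(2)[of x] mult_right_mono[of 1 "c * normpow x (2*\<delta>)" "f x"]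
      by (simp add: g_def mult.assoc)
  qed
  then have "integral (cube 1) f \<le> integral (cube 1) (\<lambda>x. g x + c * (normpow x (2*\<delta>) * f x))"
    by (intro integral_le integrable_on_cube f(1) integrable_add g(1)
        integrable_on_cmult_left[where f="\<lambda>x. normpow x (2*\<delta>) * f x", simplified]
        continuous_intros cw) auto
  also have "\<dots> = integral (cube \<rho>) f + c * integral (cube 1) (\<lambda>x. normpow x (2*\<delta>) * f x)"
    using g by (subst integral_add) (auto intro!: integrable_on_cube continuous_intros cw f(1))
  finally show ?thesis by (simp add: c_def)
qed

lemma integral_cube_sq_le_weighted_energy:
  fixes \<psi> :: "real^'n \<Rightarrow> real"
  assumes C: "C1c_with_grad \<psi> G" and "0 \<le> \<delta>1" "\<delta>1 \<le> 1" "0 \<le> \<delta>2"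
  shows "integral (cube 1) (\<lambda>x. (\<psi> x)\<^sup>2)
           \<le> 16 * (real CARD('n))\<^sup>2 * integral (cube 1) (\<lambda>x. normpow x (2*\<delta>1) * (norm (G x))\<^sup>2)
             + 4 * 2 powr (2*\<delta>2) * integral (cube 1) (\<lambda>x. normpow x (2*\<delta>2) * (\<psi> x)\<^sup>2)"
proof -
  define N where "N = real CARD('n)"
  define A where "A = integral (cube 1) (\<lambda>x. (\<psi> x)\<^sup>2)"
  define B where "B = integral (cube 1) (\<lambda>x. normpow x (2*\<delta>1) * (norm (G x))\<^sup>2)"
  define P where "P = integral (cube 1) (\<lambda>x. normpow x (2*\<delta>2) * (\<psi> x)\<^sup>2)"
  have c\<psi>: "continuous_on UNIV (\<lambda>x. (\<psi> x)\<^sup>2)"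
    using C1c_with_grad_continuous[OF C] by (intro continuous_intros)
  have A0: "0 \<le> A"
    unfolding A_def by (intro integral_nonneg integrable_on_cube c\<psi>) auto
  have "(1/2::real) ^ CARD('n) \<le> (1/2) ^ 1"
    by (intro power_decreasing) auto
  then have "(1/2) ^ CARD('n) * A \<le> A / 2"
    using A0 mult_right_mono by fastforce
  moreover have "integral (cube (1/2)) (\<lambda>x. (\<psi> x)\<^sup>2)
      \<le> (1/2) ^ CARD('n) * A + (1 - 1/2) * (A / 2 + 2 * (N / (1/2))\<^sup>2 * B)"
    unfolding A_def B_def N_def by (rule integral_inner_cube_sq_le[OF C]) (use assms in auto)
  moreover have "(1 - 1/2) * (A / 2 + 2 * (N / (1/2))\<^sup>2 * B) = A / 4 + 4 * (N\<^sup>2 * B)"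
    by (simp add: power2_eq_square algebra_simps)
  moreover have "A \<le> integral (cube (1/2)) (\<lambda>x. (\<psi> x)\<^sup>2) + 2 powr (2*\<delta>2) * P"
    using integral_cube_le_inner_plus_weighted[OF c\<psi> _ _ _ assms(4), of "1/2"]
    by (simp add: A_def P_def powr_divide mult.commute)
  ultimately have "A \<le> 16 * (N\<^sup>2 * B) + 4 * (2 powr (2*\<delta>2) * P)"
    by linarith
  then show ?thesis
    by (simp add: A_def B_def P_def N_def mult.assoc)
qed

lemma weighted_poincare_cube:
  fixes \<psi> :: "real^'n \<Rightarrow> real"
  assumes C: "C1c_with_grad \<psi> G" and "0 \<le> \<delta>1" "\<delta>1 \<le> 1" "0 \<le> \<delta>2" and \<kappa>: "\<kappa> > 0"
  shows "integral (cube 1) (\<lambda>x. (\<psi> x)\<^sup>2)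
           \<le> (16 * (real CARD('n))\<^sup>2 + 4 * 2 powr (2*\<delta>2) / \<kappa>)
             * integral (cube 1) (\<lambda>x. normpow x (2*\<delta>1) * (norm (G x))\<^sup>2 + \<kappa> * normpow x (2*\<delta>2) * (\<psi> x)\<^sup>2)"
proof -
  define M where "M = 16 * (real CARD('n))\<^sup>2 + 4 * 2 powr (2*\<delta>2) / \<kappa>"
  define B where "B = integral (cube 1) (\<lambda>x. normpow x (2*\<delta>1) * (norm (G x))\<^sup>2)"
  define P where "P = integral (cube 1) (\<lambda>x. normpow x (2*\<delta>2) * (\<psi> x)\<^sup>2)"
  have cont: "continuous_on UNIV \<psi>" "continuous_on UNIV G"
      "continuous_on UNIV (\<lambda>x::real^'n. normpow x (2*\<delta>1))" "continuous_on UNIV (\<lambda>x::real^'n. normpow x (2*\<delta>2))"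
    using C C1c_with_grad_continuous C1c_with_grad_continuous_grad assms
    by (auto intro!: continuous_on_normpow)
  have "B \<ge> 0" "P \<ge> 0"
    unfolding B_def P_def using cont
    by (auto simp: normpow_nonneg intro!: integral_nonneg integrable_on_cube continuous_intros)
  moreover have "M * \<kappa> = 16 * (real CARD('n))\<^sup>2 * \<kappa> + 4 * 2 powr (2*\<delta>2)"
    using \<kappa> by (simp add: M_def field_simps)
  ultimately have "16 * (real CARD('n))\<^sup>2 * B + 4 * 2 powr (2*\<delta>2) * P \<le> M * B + M * \<kappa> * P"
    using \<kappa> by (intro add_mono mult_right_mono) (auto simp: M_def)
  then have "integral (cube 1) (\<lambda>x. (\<psi> x)\<^sup>2) \<le> M * (B + \<kappa> * P)"
    using integral_cube_sq_le_weighted_energy[OF C assms(2-4)]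
    unfolding B_def P_def by (simp add: distrib_left mult.assoc)
  moreover have "integral (cube 1)
      (\<lambda>x. normpow x (2*\<delta>1) * (norm (G x))\<^sup>2 + \<kappa> * normpow x (2*\<delta>2) * (\<psi> x)\<^sup>2) = B + \<kappa> * P"
    unfolding B_def P_def mult.assoc using cont
    by (subst integral_add integral_mult_right, auto intro!: integrable_on_cube continuous_intros)+
  ultimately show ?thesis
    by (simp add: M_def)
qed

theorem lemma3p2:
  fixes \<delta>1 \<delta>2 :: real
  assumes "0 \<le> \<delta>1" and "\<delta>1 < 1" and "0 \<le> \<delta>2"
    and "CARD('n::finite) \<ge> 2 \<or> (CARD('n) = 1 \<and> \<delta>1 < 1/2)"
  shows "\<exists>lam>0. \<forall>(\<psi>::real^'n \<Rightarrow> real) G. C1c_with_grad \<psi> G \<longrightarrow>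
           integral (cbox (\<chi> i. -1) (\<chi> i. 1))
             (\<lambda>x. normpow x (2*\<delta>1) * (norm (G x))^2 + (pi/2)^2 * normpow x (2*\<delta>2) * (\<psi> x)^2)
           \<ge> lam * integral (cbox (\<chi> i. -1) (\<chi> i. 1)) (\<lambda>x. (\<psi> x)^2)"
proof -
  define M where "M = 16 * (real CARD('n))\<^sup>2 + 4 * 2 powr (2*\<delta>2) / (pi/2)\<^sup>2"
  have M: "M > 0"
    unfolding M_def by (intro add_pos_nonneg) auto
  show ?thesis
  proof (intro exI[of _ "1/M"] conjI allI impI)
    fix \<psi> :: "real^'n \<Rightarrow> real" and G
    assume "C1c_with_grad \<psi> G"
    from weighted_poincare_cube[OF this assms(1) _ assms(3), of "(pi/2)\<^sup>2"] assms(2)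
    show "1/M * integral (cube 1) (\<lambda>x. (\<psi> x)\<^sup>2) \<le> integral (cube 1)
        (\<lambda>x. normpow x (2*\<delta>1) * (norm (G x))\<^sup>2 + (pi/2)\<^sup>2 * normpow x (2*\<delta>2) * (\<psi> x)\<^sup>2)"
      using M unfolding M_def [symmetric] by (simp add: field_simps)
  qed (use M in simp)
qed

end
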